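(* Let $q$ be a prime power and let $n,k$ be integers with $5\le k\le \frac{n-2}{2}$ and $n\le q$. Let $\alpha_1,\dots,\alpha_n\in\mathbb{F}_q$ be pairwise distinct, and let $C_{k-1,k-2}$ be the linear code generated by the $k\times n$ matrix whose rows are $(\alpha_1^{e},\dots,\alpha_n^{e})$ for $e=0,1,\dots,k-3,k,k+1$. If $C_{k-1,k-2}$ is MDS, then $C_{k-1,k-2}$ is a non-GRS MDS code.
   Context: Convention: $0^0=1$. A linear code is MDS if its parameters $[n,k,d]$ satisfy $d=n-k+1$. For pairwise distinct $a_1,\dots,a_n\in\mathbb{F}_q$ and $w\in(\mathbb{F}_q^* )^n$, the generalized Reed–Solomon code is $GRS(n,k,\{a_i\},w)=\{(w_1f(a_1),\dots,w_nf(a_n)) : f\in\mathbb{F}_q[x],\ \deg f\le k-1\}$. Two codes are (monomially) equivalent if one is obtained from the other by a permutation of coordinates and multiplication of coordinates by nonzero scalars. A non-GRS MDS code is an MDS code not equivalent to any GRS code. *)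

theory Defs
  imports "HOL-Computational_Algebra.Polynomial" "HOL-Library.Cardinality" "HOL-Combinatorics.Permutations"
begin

text \<open>Words of length n over a field are represented as functions nat => 'a
  that vanish outside {..<n}. A code of length n is a set of such words.\<close>

definition restrict_len :: "nat \<Rightarrow> (nat \<Rightarrow> 'a::zero) \<Rightarrow> nat \<Rightarrow> 'a" where
  "restrict_len n x = (\<lambda>i. if i < n then x i else 0)"

definition words :: "nat \<Rightarrow> (nat \<Rightarrow> 'a::zero) set" where
  "words n = {x. \<forall>i\<ge>n. x i = 0}"

definition gen_code :: "nat \<Rightarrow> nat \<Rightarrow> (nat \<Rightarrow> nat \<Rightarrow> 'a::field) \<Rightarrow> (nat \<Rightarrow> 'a) set" where
  "gen_code n m G = {restrict_len n (\<lambda>i. \<Sum>j<m. c j * G j i) | c. True}"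

definition linear_code :: "nat \<Rightarrow> (nat \<Rightarrow> 'a::field) set \<Rightarrow> bool" where
  "linear_code n C \<longleftrightarrow> C \<subseteq> words n \<and> (\<lambda>_. 0) \<in> C \<and>
     (\<forall>x\<in>C. \<forall>y\<in>C. (\<lambda>i. x i + y i) \<in> C) \<and> (\<forall>a. \<forall>x\<in>C. (\<lambda>i. a * x i) \<in> C)"

definition code_dim :: "(nat \<Rightarrow> 'a::{field,finite}) set \<Rightarrow> nat" where
  "code_dim C = (THE k. card C = CARD('a) ^ k)"

definition hamming_dist :: "nat \<Rightarrow> (nat \<Rightarrow> 'a) \<Rightarrow> (nat \<Rightarrow> 'a) \<Rightarrow> nat" where
  "hamming_dist n x y = card {i. i < n \<and> x i \<noteq> y i}"

definition min_dist :: "nat \<Rightarrow> (nat \<Rightarrow> 'a) set \<Rightarrow> nat" where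
  "min_dist n C = Min {hamming_dist n x y | x y. x \<in> C \<and> y \<in> C \<and> x \<noteq> y}"

definition is_MDS :: "nat \<Rightarrow> (nat \<Rightarrow> 'a::{field,finite}) set \<Rightarrow> bool" where
  "is_MDS n C \<longleftrightarrow> linear_code n C \<and> min_dist n C = n - code_dim C + 1"

definition GRS :: "nat \<Rightarrow> nat \<Rightarrow> (nat \<Rightarrow> 'a::field) \<Rightarrow> (nat \<Rightarrow> 'a) \<Rightarrow> (nat \<Rightarrow> 'a) set" where
  "GRS n k a w = {restrict_len n (\<lambda>i. w i * poly f (a i)) | f. degree f \<le> k - 1}"

definition code_equiv :: "nat \<Rightarrow> (nat \<Rightarrow> 'a::field) set \<Rightarrow> (nat \<Rightarrow> 'a) set \<Rightarrow> bool" where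
  "code_equiv n C D \<longleftrightarrow> (\<exists>\<sigma> s. \<sigma> permutes {..<n} \<and> (\<forall>i<n. s i \<noteq> 0) \<and>
     D = (\<lambda>c. restrict_len n (\<lambda>i. s i * c (\<sigma> i))) ` C)"

definition is_GRS_equiv :: "nat \<Rightarrow> (nat \<Rightarrow> 'a::field) set \<Rightarrow> bool" where
  "is_GRS_equiv n C \<longleftrightarrow> (\<exists>k a w. inj_on a {..<n} \<and> (\<forall>i<n. w i \<noteq> 0) \<and>
     code_equiv n C (GRS n k a w))"

definition non_GRS_MDS :: "nat \<Rightarrow> (nat \<Rightarrow> 'a::{field,finite}) set \<Rightarrow> bool" where
  "non_GRS_MDS n C \<longleftrightarrow> is_MDS n C \<and> \<not> is_GRS_equiv n C"

definition expo :: "nat \<Rightarrow> nat \<Rightarrow> nat" where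
  "expo k j = (if j \<le> k - 3 then j else if j = k - 2 then k else k + 1)"

definition C_code :: "nat \<Rightarrow> nat \<Rightarrow> (nat \<Rightarrow> 'a::field) \<Rightarrow> (nat \<Rightarrow> 'a) set" where
  "C_code n k \<alpha> = gen_code n k (\<lambda>j i. \<alpha> i ^ expo k j)"

end

theory Submission
  imports Defs "HOL-Library.FuncSet"
begin

text \<open>The invariant is the Schur square C * C, the span of the componentwise products of
  codewords. A monomial equivalence with scalars s maps C * C injectively into D * D (with
  scalars s^2), and the Schur square of a GRS code of dimension k' lies in a GRS code of
  dimension 2k' - 1, so it has at most q^(2k'-1) words. On the other hand, products of
  the rows x^e, e \<in> {0, ..., k-3, k, k+1}, give every monomial x^e with
  e \<in> {0, ..., 2k-2, 2k}; these 2k exponents are below n, so evaluation at the distinct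
  points \<alpha> i is injective on them and C * C has at least q^(2k) words. As |C| \<le> q^k forces
  k' \<le> k, C cannot be equivalent to a GRS code.\<close>

definition weighted_eval_word ::
    "nat \<Rightarrow> (nat \<Rightarrow> 'a::field) \<Rightarrow> (nat \<Rightarrow> 'a) \<Rightarrow> nat set \<Rightarrow> (nat \<Rightarrow> 'a) \<Rightarrow> nat \<Rightarrow> 'a" where
  "weighted_eval_word n w \<alpha> E c = restrict_len n (\<lambda>i. w i * (\<Sum>e\<in>E. c e * \<alpha> i ^ e))"

lemma inj_on_weighted_eval_word:
  fixes \<alpha> w :: "nat \<Rightarrow> 'a::field"
  assumes "inj_on \<alpha> {..<n}" "\<forall>i<n. w i \<noteq> 0" "finite E" "E \<subseteq> {..<n}"
  shows "inj_on (weighted_eval_word n w \<alpha> E) (E \<rightarrow>\<^sub>E UNIV)"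
proof (cases "E = {}")
  case False
  then have "n > 0" using \<open>E \<subseteq> {..<n}\<close> by auto
  define p where "p c = (\<Sum>e\<in>E. monom (c e) e)" for c :: "nat \<Rightarrow> 'a"
  have poly_p: "poly (p c) x = (\<Sum>e\<in>E. c e * x ^ e)" for c x
    by (simp add: p_def poly_sum poly_monom)
  have coeff_p: "coeff (p c) e = c e" if "e \<in> E" for c e
    using that \<open>finite E\<close> by (simp add: p_def coeff_sum coeff_monom sum.delta')
  have deg: "degree (p c) < n" for c
    using \<open>E \<subseteq> {..<n}\<close> \<open>n > 0\<close>
    by (auto simp: p_def intro!: degree_sum_less degree_monom_le[THEN le_less_trans])
  show ?thesis
  proof (rule inj_onI)
    fix c d assume c: "c \<in> E \<rightarrow>\<^sub>E UNIV" and d: "d \<in> E \<rightarrow>\<^sub>E UNIV"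
      and eq: "weighted_eval_word n w \<alpha> E c = weighted_eval_word n w \<alpha> E d"
    have "poly (p c) x = poly (p d) x" if x: "x \<in> \<alpha> ` {..<n}" for x
    proof -
      obtain i where "i < n" "x = \<alpha> i" using x by auto
      then show ?thesis
        using fun_cong[OF eq, of i] assms(2)
        by (simp add: weighted_eval_word_def restrict_len_def poly_p)
    qed
    then have "p c = p d"
      using poly_eqI_degree[of "\<alpha> ` {..<n}"] deg card_image[OF assms(1)] by simp
    then show "c = d"
      using c d coeff_p by (metis PiE_ext)
  qed
qed simp

lemma card_ge_if_weighted_eval_words_in:
  fixes \<alpha> w :: "nat \<Rightarrow> 'a::{field,finite}"
  assumes "inj_on \<alpha> {..<n}" "\<forall>i<n. w i \<noteq> 0" "finite E" "E \<subseteq> {..<n}"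
    and "finite S" "\<And>c. weighted_eval_word n w \<alpha> E c \<in> S"
  shows "CARD('a) ^ card E \<le> card S"
proof -
  have "CARD('a) ^ card E = card (E \<rightarrow>\<^sub>E (UNIV :: 'a set))"
    using \<open>finite E\<close> by (simp add: card_PiE)
  also have "\<dots> \<le> card S"
    using assms by (intro card_inj_on_le[OF inj_on_weighted_eval_word]) auto
  finally show ?thesis .
qed

lemma finite_card_image_PiE_UNIV:
  fixes f :: "('i \<Rightarrow> 'a::finite) \<Rightarrow> 'b"
  assumes "finite A"
  shows "finite (f ` (A \<rightarrow>\<^sub>E UNIV))" "card (f ` (A \<rightarrow>\<^sub>E UNIV)) \<le> CARD('a) ^ card A"
  using assms card_image_le[of "A \<rightarrow>\<^sub>E (UNIV :: 'a set)" f]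
  by (simp_all add: finite_PiE card_PiE)

text \<open>No closure under scalars is needed: for a linear code C, t (x y) = (t x) y is again
  a product.\<close>
inductive_set schur_square :: "(nat \<Rightarrow> 'a::semiring_0) set \<Rightarrow> (nat \<Rightarrow> 'a) set" for C where
  zero: "(\<lambda>_. 0) \<in> schur_square C"
| mult: "x \<in> C \<Longrightarrow> y \<in> C \<Longrightarrow> (\<lambda>i. x i * y i) \<in> schur_square C"
| add: "u \<in> schur_square C \<Longrightarrow> v \<in> schur_square C \<Longrightarrow> (\<lambda>i. u i + v i) \<in> schur_square C"

lemma schur_square_sum:
  assumes "finite E" "\<And>e. e \<in> E \<Longrightarrow> f e \<in> schur_square C"
  shows "(\<lambda>i. \<Sum>e\<in>E. f e i) \<in> schur_square C"
  using assms
proof (induction E rule: finite_induct)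
  case empty
  then show ?case by (simp add: schur_square.zero)
next
  case (insert e E)
  then show ?case
    using schur_square.add[of "f e" C "\<lambda>i. \<Sum>e\<in>E. f e i"] by simp
qed

lemma schur_square_subset_words:
  assumes "C \<subseteq> words n"
  shows "schur_square C \<subseteq> words n"
proof
  fix z assume "z \<in> schur_square C"
  then show "z \<in> words n"
    by (induction z rule: schur_square.induct) (use assms in \<open>auto simp: words_def\<close>)
qed

definition monomial_map :: "nat \<Rightarrow> (nat \<Rightarrow> nat) \<Rightarrow> (nat \<Rightarrow> 'a) \<Rightarrow> (nat \<Rightarrow> 'a) \<Rightarrow> nat \<Rightarrow> 'a::semiring_0" where
  "monomial_map n \<sigma> s c = restrict_len n (\<lambda>i. s i * c (\<sigma> i))"

lemma code_equiv_iff_monomial_map: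
  "code_equiv n C D \<longleftrightarrow>
     (\<exists>\<sigma> s. \<sigma> permutes {..<n} \<and> (\<forall>i<n. s i \<noteq> 0) \<and> D = monomial_map n \<sigma> s ` C)"
  by (simp add: code_equiv_def monomial_map_def[abs_def])

lemma inj_on_monomial_map:
  fixes s :: "nat \<Rightarrow> 'a::idom"
  assumes "\<sigma> permutes {..<n}" "\<forall>i<n. s i \<noteq> 0"
  shows "inj_on (monomial_map n \<sigma> s) (words n)"
proof (rule inj_onI)
  fix x y assume x: "x \<in> words n" and y: "y \<in> words n"
    and eq: "monomial_map n \<sigma> s x = monomial_map n \<sigma> s y"
  show "x = y"
  proof
    fix j
    show "x j = y j"
    proof (cases "j < n")
      case True
      then obtain i where "i < n" "\<sigma> i = j"
        using permutes_image[OF assms(1)] by (metis imageE lessThan_iff)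
      then show ?thesis
        using fun_cong[OF eq, of i] assms(2) by (simp add: monomial_map_def restrict_len_def)
    next
      case False
      then show ?thesis using x y by (simp add: words_def)
    qed
  qed
qed

lemma monomial_map_schur_square:
  fixes s :: "nat \<Rightarrow> 'a::comm_semiring_0"
  shows "monomial_map n \<sigma> (\<lambda>i. s i * s i) ` schur_square C
           \<subseteq> schur_square (monomial_map n \<sigma> s ` C)"
proof clarify
  fix z assume "z \<in> schur_square C"
  then show "monomial_map n \<sigma> (\<lambda>i. s i * s i) z \<in> schur_square (monomial_map n \<sigma> s ` C)"
  proof (induction z rule: schur_square.induct)
    case zero
    then show ?case
      using schur_square.zero by (simp add: monomial_map_def restrict_len_def[abs_def])
  next
    case (mult x y)
    have "monomial_map n \<sigma> (\<lambda>i. s i * s i) (\<lambda>i. x i * y i)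
            = (\<lambda>i. monomial_map n \<sigma> s x i * monomial_map n \<sigma> s y i)"
      by (auto simp: monomial_map_def restrict_len_def algebra_simps)
    then show ?case
      using schur_square.mult mult.hyps by (metis image_eqI)
  next
    case (add u v)
    have "monomial_map n \<sigma> (\<lambda>i. s i * s i) (\<lambda>i. u i + v i)
            = (\<lambda>i. monomial_map n \<sigma> (\<lambda>i. s i * s i) u i + monomial_map n \<sigma> (\<lambda>i. s i * s i) v i)"
      by (auto simp: monomial_map_def restrict_len_def algebra_simps)
    then show ?case
      using schur_square.add[OF add.IH] by simp
  qed
qed

lemma card_schur_square_le_if_code_equiv:
  fixes C D :: "(nat \<Rightarrow> 'a::field) set"
  assumes "code_equiv n C D" "C \<subseteq> words n" "finite (schur_square D)"
  shows "finite (schur_square C)" "card (schur_square C) \<le> card (schur_square D)"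
proof -
  obtain \<sigma> s where \<sigma>: "\<sigma> permutes {..<n}" and s: "\<forall>i<n. s i \<noteq> 0"
    and D: "D = monomial_map n \<sigma> s ` C"
    using assms(1) unfolding code_equiv_iff_monomial_map by auto
  have "inj_on (monomial_map n \<sigma> (\<lambda>i. s i * s i)) (words n)"
    using s by (intro inj_on_monomial_map[OF \<sigma>]) simp
  then have inj: "inj_on (monomial_map n \<sigma> (\<lambda>i. s i * s i)) (schur_square C)"
    using schur_square_subset_words[OF assms(2)] by (rule inj_on_subset)
  have sub: "monomial_map n \<sigma> (\<lambda>i. s i * s i) ` schur_square C \<subseteq> schur_square D"
    unfolding D by (rule monomial_map_schur_square)
  show "finite (schur_square C)" "card (schur_square C) \<le> card (schur_square D)"
    using inj_on_finite[OF inj sub assms(3)] card_inj_on_le[OF inj sub assms(3)] .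
qed

lemma GRS_subset_weighted_eval_words:
  "GRS n k a w \<subseteq> weighted_eval_word n w a {..k-1} ` ({..k-1} \<rightarrow>\<^sub>E UNIV)"
proof
  fix z assume "z \<in> GRS n k a w"
  then obtain f where f: "degree f \<le> k - 1" and z: "z = restrict_len n (\<lambda>i. w i * poly f (a i))"
    by (auto simp: GRS_def)
  have "poly f x = (\<Sum>e\<le>k-1. coeff f e * x ^ e)" for x
    using arg_cong[OF poly_as_sum_of_monoms'[OF f], of "\<lambda>p. poly p x"]
    by (simp add: poly_sum poly_monom)
  then have "poly f x = (\<Sum>e\<le>k-1. restrict (coeff f) {..k-1} e * x ^ e)" for x
    by simp
  then have "z = weighted_eval_word n w a {..k-1} (restrict (coeff f) {..k-1})"
    by (simp add: z weighted_eval_word_def)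
  then show "z \<in> weighted_eval_word n w a {..k-1} ` ({..k-1} \<rightarrow>\<^sub>E UNIV)"
    by auto
qed

lemma weighted_eval_word_in_GRS:
  assumes "E \<subseteq> {..<k}"
  shows "weighted_eval_word n w a E c \<in> GRS n k a w"
proof -
  define f where "f = (\<Sum>e\<in>E. monom (c e) e)"
  have "finite E" using assms finite_subset by blast
  then have "degree f \<le> k - 1"
    unfolding f_def using assms
    by (intro degree_sum_le) (auto intro!: degree_monom_le[THEN order_trans])
  moreover have "weighted_eval_word n w a E c = restrict_len n (\<lambda>i. w i * poly f (a i))"
    by (simp add: weighted_eval_word_def f_def poly_sum poly_monom)
  ultimately show ?thesis by (auto simp: GRS_def)
qed

lemma schur_square_GRS_subset: "schur_square (GRS n k a w) \<subseteq> GRS n (2*k-1) a (\<lambda>i. w i * w i)"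
proof
  fix z assume "z \<in> schur_square (GRS n k a w)"
  then show "z \<in> GRS n (2*k-1) a (\<lambda>i. w i * w i)"
  proof (induction z rule: schur_square.induct)
    case zero
    show ?case
      by (auto simp: GRS_def restrict_len_def[abs_def] intro!: exI[of _ 0])
  next
    case (mult x y)
    then obtain f g where "degree f \<le> k - 1" "degree g \<le> k - 1"
      and "x = restrict_len n (\<lambda>i. w i * poly f (a i))" "y = restrict_len n (\<lambda>i. w i * poly g (a i))"
      by (auto simp: GRS_def)
    moreover from this have "degree (f * g) \<le> 2*k - 1 - 1"
      using degree_mult_le[of f g] by linarith
    ultimately show ?case
      by (auto simp: GRS_def restrict_len_def algebra_simps intro!: exI[of _ "f * g"])
  next
    case (add u v)
    then obtain f g where "degree f \<le> 2*k - 1 - 1" "degree g \<le> 2*k - 1 - 1"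
      and "u = restrict_len n (\<lambda>i. w i * w i * poly f (a i))"
      and "v = restrict_len n (\<lambda>i. w i * w i * poly g (a i))"
      by (auto simp: GRS_def)
    moreover from this have "degree (f + g) \<le> 2*k - 1 - 1"
      by (simp add: degree_add_le)
    ultimately show ?case
      by (auto simp: GRS_def restrict_len_def algebra_simps intro!: exI[of _ "f + g"])
  qed
qed

text \<open>The exponent is Suc (k - 1), not k: by truncated subtraction GRS n 0 a w is the code of
  constant polynomials.\<close>
lemma card_GRS_le:
  fixes a w :: "nat \<Rightarrow> 'a::{field,finite}"
  shows "finite (GRS n k a w)" "card (GRS n k a w) \<le> CARD('a) ^ Suc (k - 1)"
  using finite_card_image_PiE_UNIV[of "{..k-1}" "weighted_eval_word n w a {..k-1}"]
    GRS_subset_weighted_eval_words[of n k a w]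
  by (auto intro: finite_subset card_mono[THEN order_trans])

lemma card_GRS_ge:
  fixes a w :: "nat \<Rightarrow> 'a::{field,finite}"
  assumes "inj_on a {..<n}" "\<forall>i<n. w i \<noteq> 0" "m \<le> k" "m \<le> n"
  shows "CARD('a) ^ m \<le> card (GRS n k a w)"
proof -
  have "CARD('a) ^ card {..<m} \<le> card (GRS n k a w)"
    using assms(3,4)
    by (intro card_ge_if_weighted_eval_words_in[OF assms(1,2)] card_GRS_le(1) weighted_eval_word_in_GRS)
      auto
  then show ?thesis by simp
qed

lemma gen_code_subset_words: "gen_code n m G \<subseteq> words n"
  by (auto simp: gen_code_def restrict_len_def words_def)

lemma card_gen_code_le:
  fixes G :: "nat \<Rightarrow> nat \<Rightarrow> 'a::{field,finite}"
  shows "finite (gen_code n m G)" "card (gen_code n m G) \<le> CARD('a) ^ m"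
proof -
  define F where "F c = restrict_len n (\<lambda>i. \<Sum>j<m. c j * G j i)" for c :: "nat \<Rightarrow> 'a"
  have "gen_code n m G \<subseteq> F ` ({..<m} \<rightarrow>\<^sub>E UNIV)"
  proof
    fix z assume "z \<in> gen_code n m G"
    then obtain c where "z = F c" by (auto simp: gen_code_def F_def)
    also have "F c = F (restrict c {..<m})" by (simp add: F_def)
    finally show "z \<in> F ` ({..<m} \<rightarrow>\<^sub>E UNIV)" by auto
  qed
  then show "finite (gen_code n m G)" "card (gen_code n m G) \<le> CARD('a) ^ m"
    using finite_card_image_PiE_UNIV[of "{..<m}" F] by (auto intro: finite_subset card_mono[THEN order_trans])
qed

lemma row_multiple_in_gen_code:
  assumes "j < m"
  shows "restrict_len n (\<lambda>i. t * G j i) \<in> gen_code n m G"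
proof -
  have "(\<Sum>j'<m. (if j' = j then t else 0) * G j' i) = t * G j i" for i
    using assms by (simp add: if_distrib if_distribR cong: if_cong)
  then show ?thesis unfolding gen_code_def by (auto intro!: exI[of _ "\<lambda>j'. if j' = j then t else 0"])
qed

text \<open>The row exponents are 0, ..., k-3, k, k+1. The sums j + j' and k + j' (j, j' \<le> k-3)
  cover [0, 2k-6] and [k, 2k-3]; k \<ge> 5 is exactly what closes the gap between them.\<close>
lemma expo_sums_cover:
  assumes "5 \<le> k" "e \<in> insert (2*k) {..<2*k-1}"
  obtains j j' where "j < k" "j' < k" "expo k j + expo k j' = e"
proof -
  consider "e \<le> 2*k - 6" | "k \<le> e" "e \<le> 2*k - 3" | "e = 2*k - 2" | "e = 2*k"
    using assms by force
  then show ?thesis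
  proof cases
    case 1
    then show ?thesis
      using assms(1) by (intro that[of "min e (k-3)" "e - min e (k-3)"]) (auto simp: expo_def)
  next
    case 2
    then show ?thesis
      using assms(1) by (intro that[of "k-2" "e - k"]) (auto simp: expo_def)
  next
    case 3
    then show ?thesis
      using assms(1) by (intro that[of "k-1" "k-3"]) (auto simp: expo_def)
  next
    case 4
    then show ?thesis
      using assms(1) by (intro that[of "k-2" "k-2"]) (auto simp: expo_def)
  qed
qed

lemma card_schur_square_C_code_ge:
  fixes \<alpha> :: "nat \<Rightarrow> 'a::{field,finite}"
  assumes "5 \<le> k" "2*k < n" "inj_on \<alpha> {..<n}" "finite (schur_square (C_code n k \<alpha>))"
  shows "CARD('a) ^ (2*k) \<le> card (schur_square (C_code n k \<alpha>))"
proof -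
  define E where "E = insert (2*k) {..<2*k-1}"
  have "CARD('a) ^ card E \<le> card (schur_square (C_code n k \<alpha>))"
  proof (rule card_ge_if_weighted_eval_words_in[OF assms(3), of "\<lambda>_. 1"])
    show "finite E" "E \<subseteq> {..<n}"
      using assms(2) by (auto simp: E_def)
    fix c
    have monomial: "restrict_len n (\<lambda>i. c e * \<alpha> i ^ e) \<in> schur_square (C_code n k \<alpha>)"
      if e_in: "e \<in> E" for e
    proof -
      obtain j j' where "j < k" "j' < k" and e: "expo k j + expo k j' = e"
        using expo_sums_cover[OF assms(1) e_in[unfolded E_def]] .
      have "restrict_len n (\<lambda>i. c e * \<alpha> i ^ expo k j) \<in> C_code n k \<alpha>"
        unfolding C_code_def using \<open>j < k\<close> by (rule row_multiple_in_gen_code)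
      moreover have "restrict_len n (\<lambda>i. 1 * \<alpha> i ^ expo k j') \<in> C_code n k \<alpha>"
        unfolding C_code_def using \<open>j' < k\<close> by (rule row_multiple_in_gen_code)
      moreover have "restrict_len n (\<lambda>i. c e * \<alpha> i ^ e) =
          (\<lambda>i. restrict_len n (\<lambda>i. c e * \<alpha> i ^ expo k j) i * restrict_len n (\<lambda>i. 1 * \<alpha> i ^ expo k j') i)"
        by (auto simp: restrict_len_def e[symmetric] power_add)
      ultimately show ?thesis
        by (simp only: schur_square.mult)
    qed
    have "weighted_eval_word n (\<lambda>_. 1) \<alpha> E c = (\<lambda>i. \<Sum>e\<in>E. restrict_len n (\<lambda>i. c e * \<alpha> i ^ e) i)"
      by (auto simp: weighted_eval_word_def restrict_len_def)
    then show "weighted_eval_word n (\<lambda>_. 1) \<alpha> E c \<in> schur_square (C_code n k \<alpha>)"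
      using schur_square_sum[OF \<open>finite E\<close> monomial] by simp
  qed (use assms(4) in simp_all)
  moreover have "card E = 2*k"
    using assms(1) by (simp add: E_def)
  ultimately show ?thesis by simp
qed

lemma one_less_CARD_field: "1 < CARD('a::{field,finite})"
proof -
  have "card {0::'a, 1} \<le> CARD('a)"
    by (rule card_mono) auto
  then show ?thesis by simp
qed

lemma dim_le_if_gen_code_equiv_GRS:
  fixes G :: "nat \<Rightarrow> nat \<Rightarrow> 'a::{field,finite}"
  assumes "code_equiv n (gen_code n m G) (GRS n k a w)" "inj_on a {..<n}" "\<forall>i<n. w i \<noteq> 0"
    and "m < n"
  shows "k \<le> m"
proof -
  obtain \<sigma> s where "GRS n k a w = monomial_map n \<sigma> s ` gen_code n m G"
    using assms(1) unfolding code_equiv_iff_monomial_map by auto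
  then have "card (GRS n k a w) \<le> card (gen_code n m G)"
    by (simp add: card_image_le card_gen_code_le(1))
  then have "CARD('a) ^ min k n \<le> CARD('a) ^ m"
    using card_GRS_ge[OF assms(2,3), of "min k n" k] card_gen_code_le(2)[of n m G] by simp
  then have "min k n \<le> m"
    using one_less_CARD_field power_le_imp_le_exp by blast
  then show ?thesis using assms(4) by simp
qed

lemma card_schur_square_le_if_equiv_GRS:
  fixes a w :: "nat \<Rightarrow> 'a::{field,finite}"
  assumes "code_equiv n C (GRS n k a w)" "C \<subseteq> words n"
  shows "finite (schur_square C)" "card (schur_square C) \<le> CARD('a) ^ Suc (2*k - 1 - 1)"
proof -
  let ?G2 = "GRS n (2*k-1) a (\<lambda>i. w i * w i)"
  have "finite (schur_square (GRS n k a w))"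
    using schur_square_GRS_subset card_GRS_le(1) by (rule finite_subset)
  note sq = card_schur_square_le_if_code_equiv[OF assms this]
  show "finite (schur_square C)" by (fact sq(1))
  have "card (schur_square C) \<le> card ?G2"
    using sq(2) card_mono[OF card_GRS_le(1) schur_square_GRS_subset] by (rule order_trans)
  also have "\<dots> \<le> CARD('a) ^ Suc (2*k - 1 - 1)"
    by (rule card_GRS_le(2))
  finally show "card (schur_square C) \<le> CARD('a) ^ Suc (2*k - 1 - 1)" .
qed

theorem theorem3p7:
  fixes \<alpha> :: "nat \<Rightarrow> 'a::{field,finite}" and n k :: nat
  assumes "5 \<le> k" and "2 * k \<le> n - 2" and "n \<le> CARD('a)"
    and "inj_on \<alpha> {..<n}"
    and "is_MDS n (C_code n k \<alpha>)"
  shows "non_GRS_MDS n (C_code n k \<alpha>)"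
proof -
  have "2*k < n" using assms(1,2) by linarith
  have "\<not> is_GRS_equiv n (C_code n k \<alpha>)"
  proof
    assume "is_GRS_equiv n (C_code n k \<alpha>)"
    then obtain k' a w where a: "inj_on a {..<n}" and w: "\<forall>i<n. w i \<noteq> 0"
      and equiv: "code_equiv n (C_code n k \<alpha>) (GRS n k' a w)"
      unfolding is_GRS_equiv_def by blast
    have "k' \<le> k"
      using dim_le_if_gen_code_equiv_GRS[OF equiv[unfolded C_code_def] a w] \<open>2*k < n\<close> by simp
    note sq = card_schur_square_le_if_equiv_GRS[OF equiv, unfolded C_code_def, OF gen_code_subset_words]
    have "CARD('a) ^ (2*k) \<le> CARD('a) ^ Suc (2*k' - 1 - 1)"
      using card_schur_square_C_code_ge[OF assms(1) \<open>2*k < n\<close> assms(4)] sq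
      unfolding C_code_def by (meson order_trans)
    then have "2*k \<le> Suc (2*k' - 1 - 1)"
      using one_less_CARD_field power_le_imp_le_exp by blast
    then show False using \<open>k' \<le> k\<close> assms(1) by linarith
  qed
  then show ?thesis
    using assms(5) unfolding non_GRS_MDS_def by blast
qed

end
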